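(* Let $p$ be an odd prime and let $G$ be a quasi-powerful $p$-group. For any $g,h\in G$ there exist $j\in G$ and $z\in Z(G)$ such that $g^{p}h^{p}=j^{p}z$.
   Context: For an odd prime $p$, a finite $p$-group $G$ is powerful if $[G,G]\le G^{p}$ (where $G^{p}=\langle g^p\mid g\in G\rangle$), and $G$ is quasi-powerful if $G/Z(G)$ is powerful. *)

theory Defs
  imports "HOL-Algebra.Algebra"
begin

definition group_center :: "('a, 'b) monoid_scheme \<Rightarrow> 'a set" where
  "group_center G = {z \<in> carrier G. \<forall>g \<in> carrier G. z \<otimes>\<^bsub>G\<^esub> g = g \<otimes>\<^bsub>G\<^esub> z}"

definition p_group :: "nat \<Rightarrow> ('a, 'b) monoid_scheme \<Rightarrow> bool" where
  "p_group p G \<longleftrightarrow> group G \<and> finite (carrier G) \<and> (\<exists>n. order G = p ^ n)"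

definition pth_power_subgroup :: "nat \<Rightarrow> ('a, 'b) monoid_scheme \<Rightarrow> 'a set" where
  "pth_power_subgroup p G = generate G {g [^]\<^bsub>G\<^esub> p | g. g \<in> carrier G}"

definition powerful :: "nat \<Rightarrow> ('a, 'b) monoid_scheme \<Rightarrow> bool" where
  "powerful p G \<longleftrightarrow> derived G (carrier G) \<subseteq> pth_power_subgroup p G"

definition quasi_powerful :: "nat \<Rightarrow> ('a, 'b) monoid_scheme \<Rightarrow> bool" where
  "quasi_powerful p G \<longleftrightarrow> powerful p (G Mod group_center G)"

end

theory Submission
  imports Defs
begin

(*
  Modulo the centre, g^p h^p is a product of two p-th powers in the powerful p-group G/Z(G), so it
  suffices that in a powerful p-group, p odd, a product of two p-th powers is a p-th power
  (Lubotzky and Mann).  Put N_0 = G and N_(k+1) = N_k^p.  A Frattini-type argument (if N lies in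
  the subgroup generated by N^p, [N, G] and a normal subgroup M, then N lies in M) shows that
  [N, G] <= N^p implies [N^p, G] <= (N^p)^p, hence [N_k, G] <= N_(k+1) for all k.  Modulo N_(k+2)
  the commutator [u, c] of u in N_k and c in G is then central of order p, and the class-two
  formula (c u)^p = c^p u^p [u, c]^(p(p-1)/2) gives c^p u^p = (c u)^p w with w in N_(k+2).
  Downward induction from the trivial end of the series shows that c^p w is a p-th power for
  every w in N_(k+1); the case k = 0, w = h^p is the claim.
*)

definition commutator :: "('a, 'b) monoid_scheme \<Rightarrow> 'a \<Rightarrow> 'a \<Rightarrow> 'a" where
  "commutator G x y = inv\<^bsub>G\<^esub> x \<otimes>\<^bsub>G\<^esub> inv\<^bsub>G\<^esub> y \<otimes>\<^bsub>G\<^esub> x \<otimes>\<^bsub>G\<^esub> y"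

section \<open>Commutators and groups of class two\<close>

context group begin

lemma inv_mult_cancel [simp]: "x \<in> carrier G \<Longrightarrow> y \<in> carrier G \<Longrightarrow> inv x \<otimes> (x \<otimes> y) = y"
  by (simp flip: m_assoc)

lemma mult_inv_cancel [simp]: "x \<in> carrier G \<Longrightarrow> y \<in> carrier G \<Longrightarrow> x \<otimes> (inv x \<otimes> y) = y"
  by (simp flip: m_assoc)

lemma commutator_closed [simp]:
  "x \<in> carrier G \<Longrightarrow> y \<in> carrier G \<Longrightarrow> commutator G x y \<in> carrier G"
  by (simp add: commutator_def)

lemma commutator_eq_one_iff:
  assumes "x \<in> carrier G" "y \<in> carrier G"
  shows "commutator G x y = \<one> \<longleftrightarrow> x \<otimes> y = y \<otimes> x"
proof -
  have "commutator G x y = inv (y \<otimes> x) \<otimes> (x \<otimes> y)"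
    using assms by (simp add: commutator_def inv_mult_group m_assoc)
  then show ?thesis
    using assms by (metis inv_closed inv_inv l_inv m_closed inv_equality)
qed

lemma conj_eq_mult_commutator:
  "a \<in> carrier G \<Longrightarrow> b \<in> carrier G \<Longrightarrow> inv a \<otimes> b \<otimes> a = b \<otimes> commutator G b a"
  by (simp add: commutator_def m_assoc)

lemma conj_nat_pow:
  assumes "a \<in> carrier G" "b \<in> carrier G"
  shows "inv a \<otimes> b [^] (n::nat) \<otimes> a = (inv a \<otimes> b \<otimes> a) [^] n"
proof (induction n)
  case (Suc n)
  have "inv a \<otimes> b [^] Suc n \<otimes> a = (inv a \<otimes> b [^] n \<otimes> a) \<otimes> (inv a \<otimes> b \<otimes> a)"
    using assms by (simp add: m_assoc)
  then show ?case
    using Suc by simp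
qed (use assms in simp)

lemma commutator_nat_pow_left:
  assumes c: "c \<in> carrier G" and x: "x \<in> carrier G"
    and comm: "commutator G c x \<otimes> c = c \<otimes> commutator G c x"
  shows "commutator G (c [^] (n::nat)) x = commutator G c x [^] n"
proof -
  have "commutator G (c [^] n) x = inv (c [^] n) \<otimes> (inv x \<otimes> c [^] n \<otimes> x)"
    using c x by (simp add: commutator_def m_assoc)
  also have "inv x \<otimes> c [^] n \<otimes> x = c [^] n \<otimes> commutator G c x [^] n"
    using c x comm by (simp only: conj_nat_pow conj_eq_mult_commutator pow_mult_distrib commutator_closed)
  finally show ?thesis
    using c x by simp
qed

lemma nat_pow_mult_class_two:
  assumes a: "a \<in> carrier G" and b: "b \<in> carrier G"
    and ea: "commutator G b a \<otimes> a = a \<otimes> commutator G b a"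
    and eb: "commutator G b a \<otimes> b = b \<otimes> commutator G b a"
  shows "(a \<otimes> b) [^] (n::nat) = a [^] n \<otimes> b [^] n \<otimes> commutator G b a [^] (n * (n - 1) div 2)"
proof (induction n)
  case (Suc n)
  define e where "e = commutator G b a"
  define t where "t = n * (n - 1) div 2"
  have e: "e \<in> carrier G"
    using a b by (simp add: e_def)
  have et: "e [^] t \<otimes> a = a \<otimes> e [^] t" "e [^] t \<otimes> b = b \<otimes> e [^] t"
    using ea eb a b e by (simp_all add: e_def group_commutes_pow)
  have en: "e [^] n \<otimes> b = b \<otimes> e [^] n"
    using eb b e by (simp add: e_def group_commutes_pow)
  have swap: "b [^] n \<otimes> a = a \<otimes> b [^] n \<otimes> e [^] n"
  proof -
    have "inv a \<otimes> b [^] n \<otimes> a = b [^] n \<otimes> e [^] n"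
      using conj_eq_mult_commutator [of a "b [^] n"] commutator_nat_pow_left [OF b a eb] a b
      by (simp add: e_def)
    then have "a \<otimes> (inv a \<otimes> b [^] n \<otimes> a) = a \<otimes> (b [^] n \<otimes> e [^] n)"
      by simp
    then show ?thesis
      using a b e by (simp add: m_assoc)
  qed
  have "(a \<otimes> b) [^] Suc n = a [^] n \<otimes> (b [^] n \<otimes> (e [^] t \<otimes> a) \<otimes> b)"
    using Suc a b e by (simp add: e_def t_def m_assoc)
  also have "\<dots> = a [^] n \<otimes> (b [^] n \<otimes> a) \<otimes> b \<otimes> e [^] t"
    using a b e et by (simp add: m_assoc)
  also have "\<dots> = a [^] n \<otimes> a \<otimes> (b [^] n \<otimes> (e [^] n \<otimes> b)) \<otimes> e [^] t"
    using a b e swap by (simp add: m_assoc)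
  also have "\<dots> = a [^] Suc n \<otimes> b [^] Suc n \<otimes> e [^] (n + t)"
    using a b e en by (simp add: m_assoc nat_pow_mult)
  also have "n + t = Suc n * (Suc n - 1) div 2"
    by (cases n) (auto simp: t_def)
  finally show ?case
    by (simp add: e_def)
qed simp

lemma nat_pow_mult_odd_class_two:
  assumes a: "a \<in> carrier G" and b: "b \<in> carrier G"
    and ea: "commutator G b a \<otimes> a = a \<otimes> commutator G b a"
    and eb: "commutator G b a \<otimes> b = b \<otimes> commutator G b a"
    and ep: "commutator G b a [^] p = \<one>" and p: "odd (p::nat)"
  shows "(a \<otimes> b) [^] p = a [^] p \<otimes> b [^] p"
proof -
  obtain k where "p = 2 * k + 1"
    using p oddE by blast
  then have "p * (p - 1) div 2 = p * k"
    by simp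
  then have "commutator G b a [^] (p * (p - 1) div 2) = \<one>"
    using a b ep by (simp add: nat_pow_pow [symmetric])
  then show ?thesis
    using nat_pow_mult_class_two [OF a b ea eb, of p] a b by simp
qed

text \<open>With \<open>c = [x, y]\<close>: \<open>y\<inverse> x\<^sup>p y = (x c)\<^sup>p = x\<^sup>p c\<^sup>p [c, x]\<^bsup>p(p-1)/2\<^esup> = x\<^sup>p\<close>.\<close>

lemma nat_pow_commute_if_commutator_nat_pow_eq_one:
  assumes x: "x \<in> carrier G" and y: "y \<in> carrier G"
    and cp: "commutator G x y [^] p = \<one>" and p: "odd (p::nat)"
    and ec: "commutator G (commutator G x y) x \<otimes> commutator G x y
               = commutator G x y \<otimes> commutator G (commutator G x y) x"
    and ex: "commutator G (commutator G x y) x \<otimes> x = x \<otimes> commutator G (commutator G x y) x"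
  shows "x [^] p \<otimes> y = y \<otimes> x [^] p"
proof -
  define c where "c = commutator G x y"
  have c: "c \<in> carrier G"
    using x y by (simp add: c_def)
  have "commutator G c x [^] p = commutator G (c [^] p) x"
    using commutator_nat_pow_left [OF c x] ec by (simp add: c_def)
  also have "\<dots> = \<one>"
    using cp x by (simp add: c_def commutator_def)
  finally have "(x \<otimes> c) [^] p = x [^] p"
    using nat_pow_mult_odd_class_two [OF x c] ex ec cp p x by (simp add: c_def)
  moreover have "inv y \<otimes> x [^] p \<otimes> y = (x \<otimes> c) [^] p"
    using conj_nat_pow [OF y x] conj_eq_mult_commutator [OF y x] by (simp add: c_def)
  ultimately have "y \<otimes> (inv y \<otimes> x [^] p \<otimes> y) = y \<otimes> x [^] p"
    by simp
  then show ?thesis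
    using x y by (simp add: m_assoc)
qed

end

section \<open>Quotients and centres\<close>

declare mult_FactGroup [simp del] one_FactGroup [simp del]

definition center_mod :: "('a, 'b) monoid_scheme \<Rightarrow> 'a set \<Rightarrow> 'a set" where
  "center_mod G H = {a \<in> carrier G. \<forall>g \<in> carrier G. commutator G a g \<in> H}"

lemma (in group_hom) subgroup_vimage:
  assumes "subgroup K H"
  shows "subgroup (h -` K \<inter> carrier G) G"
proof (rule G.subgroupI)
  have "\<one> \<in> h -` K \<inter> carrier G"
    using subgroup.one_closed [OF assms] by simp
  then show "h -` K \<inter> carrier G \<noteq> {}"
    by blast
qed (use subgroup.m_inv_closed [OF assms] subgroup.m_closed [OF assms] in auto)

context group begin

lemma commute_inv:
  assumes "x \<in> carrier G" "y \<in> carrier G" "x \<otimes> y = y \<otimes> x"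
  shows "inv x \<otimes> y = y \<otimes> inv x"
proof -
  have "inv x \<otimes> (y \<otimes> x) \<otimes> inv x = inv x \<otimes> (x \<otimes> y) \<otimes> inv x"
    using assms(3) by simp
  then show ?thesis
    using assms(1,2) by (simp add: m_assoc)
qed

lemma group_center_subgroup: "subgroup (group_center G) G"
proof (rule subgroupI)
  have "\<one> \<in> group_center G"
    by (simp add: group_center_def)
  then show "group_center G \<subseteq> carrier G" "group_center G \<noteq> {}"
    by (auto simp: group_center_def)
next
  fix a
  assume "a \<in> group_center G"
  then have "a \<in> carrier G" "\<forall>g \<in> carrier G. a \<otimes> g = g \<otimes> a"
    by (simp_all add: group_center_def)
  then show "inv a \<in> group_center G"
    unfolding group_center_def using commute_inv by blast
next
  fix a b
  assume "a \<in> group_center G" "b \<in> group_center G"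
  then have a: "a \<in> carrier G" "\<And>g. g \<in> carrier G \<Longrightarrow> a \<otimes> g = g \<otimes> a"
    and b: "b \<in> carrier G" "\<And>g. g \<in> carrier G \<Longrightarrow> b \<otimes> g = g \<otimes> b"
    by (auto simp: group_center_def)
  have "a \<otimes> b \<otimes> g = g \<otimes> (a \<otimes> b)" if g: "g \<in> carrier G" for g
  proof -
    have "a \<otimes> b \<otimes> g = a \<otimes> (g \<otimes> b)"
      using a(1) b g by (simp add: m_assoc)
    also have "\<dots> = (a \<otimes> g) \<otimes> b"
      using a(1) b(1) g by (simp add: m_assoc)
    also have "\<dots> = g \<otimes> (a \<otimes> b)"
      using a(1) b(1) g by (simp add: a(2) m_assoc)
    finally show ?thesis .
  qed
  then show "a \<otimes> b \<in> group_center G"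
    using a(1) b(1) by (simp add: group_center_def)
qed

lemma group_center_normal: "group_center G \<lhd> G"
proof (rule normal_invI [OF group_center_subgroup])
  fix x h
  assume "x \<in> carrier G" "h \<in> group_center G"
  then show "x \<otimes> h \<otimes> inv x \<in> group_center G"
    by (simp add: group_center_def m_assoc)
qed

end

context normal begin

lemma rcos_group_hom: "group_hom G (G Mod H) ((#>) H)"
  using r_coset_hom_Mod factorgroup_is_group
  by (simp add: group_hom_def group_hom_axioms_def is_group)

lemma rcos_closed [simp]: "x \<in> carrier G \<Longrightarrow> H #> x \<in> carrier (G Mod H)"
  by (simp add: carrier_FactGroup)

lemma rcos_mult: "x \<in> carrier G \<Longrightarrow> y \<in> carrier G \<Longrightarrow> H #> (x \<otimes> y) = (H #> x) \<otimes>\<^bsub>G Mod H\<^esub> (H #> y)"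
  by (rule group_hom.hom_mult [OF rcos_group_hom])

lemma rcos_inv: "x \<in> carrier G \<Longrightarrow> H #> inv x = inv\<^bsub>G Mod H\<^esub> (H #> x)"
  by (rule group_hom.hom_inv [OF rcos_group_hom])

lemma rcos_nat_pow: "x \<in> carrier G \<Longrightarrow> H #> (x [^] (n::nat)) = (H #> x) [^]\<^bsub>G Mod H\<^esub> n"
  by (rule group_hom.hom_nat_pow [OF rcos_group_hom])

lemma rcos_eq_self_iff:
  assumes "x \<in> carrier G"
  shows "H #> x = H \<longleftrightarrow> x \<in> H"
proof
  assume "H #> x = H"
  then show "x \<in> H"
    using rcos_self [OF assms is_subgroup] by simp
qed (rule rcos_const [OF is_group])

lemma rcos_eq_rcos_imp_mult:
  assumes x: "x \<in> carrier G" and y: "y \<in> carrier G" and eq: "H #> x = H #> y"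
  shows "\<exists>z \<in> H. x = y \<otimes> z"
proof -
  interpret Q: group "G Mod H"
    by (rule factorgroup_is_group)
  have "H #> (inv y \<otimes> x) = inv\<^bsub>G Mod H\<^esub> (H #> y) \<otimes>\<^bsub>G Mod H\<^esub> (H #> x)"
    using x y by (simp add: rcos_mult rcos_inv)
  also have "\<dots> = \<one>\<^bsub>G Mod H\<^esub>"
    using y eq by simp
  finally have "inv y \<otimes> x \<in> H"
    using x y rcos_eq_self_iff [of "inv y \<otimes> x"] by (simp add: one_FactGroup)
  moreover have "x = y \<otimes> (inv y \<otimes> x)"
    using x y by simp
  ultimately show ?thesis
    by blast
qed

lemma rcos_commutator:
  "x \<in> carrier G \<Longrightarrow> y \<in> carrier G \<Longrightarrow>
    H #> commutator G x y = commutator (G Mod H) (H #> x) (H #> y)"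
  by (simp add: commutator_def rcos_mult rcos_inv)

lemma commutator_mem_iff_commute:
  assumes "x \<in> carrier G" "y \<in> carrier G"
  shows "commutator G x y \<in> H \<longleftrightarrow> (H #> x) \<otimes>\<^bsub>G Mod H\<^esub> (H #> y) = (H #> y) \<otimes>\<^bsub>G Mod H\<^esub> (H #> x)"
proof -
  have "commutator G x y \<in> H \<longleftrightarrow> commutator (G Mod H) (H #> x) (H #> y) = \<one>\<^bsub>G Mod H\<^esub>"
    using assms rcos_eq_self_iff [of "commutator G x y"] by (simp add: rcos_commutator one_FactGroup)
  also have "\<dots> \<longleftrightarrow> (H #> x) \<otimes>\<^bsub>G Mod H\<^esub> (H #> y) = (H #> y) \<otimes>\<^bsub>G Mod H\<^esub> (H #> x)"
    using assms by (intro group.commutator_eq_one_iff factorgroup_is_group rcos_closed)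
  finally show ?thesis .
qed

lemma center_mod_eq_vimage: "center_mod G H = (#>) H -` group_center (G Mod H) \<inter> carrier G"
proof -
  have "(\<forall>g \<in> carrier G. commutator G x g \<in> H) \<longleftrightarrow> H #> x \<in> group_center (G Mod H)"
    if x: "x \<in> carrier G" for x
    using x by (simp add: commutator_mem_iff_commute group_center_def carrier_FactGroup)
  then show ?thesis
    unfolding center_mod_def by blast
qed

lemma center_mod_subgroup: "subgroup (center_mod G H) G"
  unfolding center_mod_eq_vimage
  by (rule group_hom.subgroup_vimage [OF rcos_group_hom
        group.group_center_subgroup [OF factorgroup_is_group]])

lemma normal_if_subset_center_mod:
  assumes K: "subgroup K G" and HK: "H \<subseteq> K" and Kc: "K \<subseteq> center_mod G H"
  shows "K \<lhd> G"
proof (rule normal_invI [OF K])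
  fix g k
  assume g: "g \<in> carrier G" and k: "k \<in> K"
  have kc: "k \<in> carrier G"
    using k subgroup.subset [OF K] by blast
  have "g \<otimes> k \<otimes> inv g = k \<otimes> commutator G k (inv g)"
    using g kc by (simp add: commutator_def m_assoc)
  moreover have "commutator G k (inv g) \<in> H"
    using k g Kc by (auto simp: center_mod_def)
  ultimately show "g \<otimes> k \<otimes> inv g \<in> K"
    using k HK subgroup.m_closed [OF K] by auto
qed

lemma p_group_FactGroup:
  assumes "p_group p G" and p: "Factorial_Ring.prime p"
  shows "p_group p (G Mod H)"
proof -
  obtain n where fin: "finite (carrier G)" and ord: "order G = p ^ n"
    using assms(1) by (auto simp: p_group_def)
  have "order (G Mod H) * card H = order G"
    using lagrange [OF is_subgroup] by (simp add: order_def FactGroup_def)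
  then have "order (G Mod H) dvd p ^ n"
    using ord by (metis dvd_triv_left)
  then obtain i where "order (G Mod H) = p ^ i"
    using divides_primepow_nat [OF p] by blast
  moreover have "finite (carrier (G Mod H))"
    using fin by (simp add: carrier_FactGroup)
  ultimately show ?thesis
    using factorgroup_is_group by (auto simp: p_group_def)
qed

end

context group begin

lemma subgroup_nat_pow_closed:
  "subgroup K G \<Longrightarrow> x \<in> K \<Longrightarrow> x [^] (n::nat) \<in> K"
  using subgroup_int_pow_closed [of K x "int n"] by (simp add: int_pow_int)

lemma conjugation_orbit_singleton_imp_center:
  assumes x: "x \<in> carrier G"
    and orb: "orbit G (\<lambda>g. \<lambda>h \<in> carrier G. g \<otimes> h \<otimes> inv g) x = {x}"
  shows "x \<in> group_center G"
proof -
  have "x \<otimes> g = g \<otimes> x" if g: "g \<in> carrier G" for g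
  proof -
    have "g \<otimes> x \<otimes> inv g = x"
      using orb g x unfolding orbit_def by auto
    then have "g \<otimes> x \<otimes> inv g \<otimes> g = x \<otimes> g"
      by simp
    then show ?thesis
      using g x by (simp add: m_assoc)
  qed
  then show ?thesis
    using x by (simp add: group_center_def)
qed

lemma p_dvd_card_conjugation_orbit:
  assumes pG: "p_group p G" and p: "Factorial_Ring.prime p"
    and x: "x \<in> carrier G" and noncentral: "x \<notin> group_center G"
  shows "p dvd card (orbit G (\<lambda>g. \<lambda>h \<in> carrier G. g \<otimes> h \<otimes> inv g) x)"
proof -
  define \<phi> where "\<phi> = (\<lambda>g. \<lambda>h \<in> carrier G. g \<otimes> h \<otimes> inv g)"
  interpret A: group_action G "carrier G" \<phi>
    unfolding \<phi>_def by (rule action_by_conjugation)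
  obtain n where "order G = p ^ n"
    using pG by (auto simp: p_group_def)
  then have "card (orbit G \<phi> x) * card (stabilizer G \<phi> x) = p ^ n"
    using A.orbit_stabilizer_theorem [OF x] by simp
  then obtain i where i: "card (orbit G \<phi> x) = p ^ i"
    using divides_primepow_nat [OF p] by (metis dvdI)
  have "i \<noteq> 0"
  proof
    assume "i = 0"
    then obtain y where "orbit G \<phi> x = {y}"
      using i card_1_singletonE by auto
    then have "orbit G \<phi> x = {x}"
      using A.orbit_refl [OF x] by simp
    then show False
      using conjugation_orbit_singleton_imp_center x noncentral unfolding \<phi>_def by blast
  qed
  then show ?thesis
    using i by (simp add: \<phi>_def)
qed

text \<open>The class equation: \<open>|G| \<equiv> |Z(G)| (mod p)\<close>.\<close>

lemma p_group_center_nontrivial: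
  assumes pG: "p_group p G" and p: "Factorial_Ring.prime p" and nontriv: "carrier G \<noteq> {\<one>}"
  shows "\<exists>z \<in> group_center G. z \<noteq> \<one>"
proof (rule ccontr)
  assume trivial_center: "\<not> ?thesis"
  obtain n where fin: "finite (carrier G)" and ord: "order G = p ^ n"
    using pG by (auto simp: p_group_def)
  have "n \<noteq> 0"
    using ord nontriv one_closed by (metis card_1_singletonE order_def power_0 singletonD)
  define \<phi> where "\<phi> = (\<lambda>g. \<lambda>h \<in> carrier G. g \<otimes> h \<otimes> inv g)"
  interpret A: group_action G "carrier G" \<phi>
    unfolding \<phi>_def by (rule action_by_conjugation)
  let ?O = "orbits G (carrier G) \<phi>"
  have "finite ?O"
    using fin A.orbits_coverture by (metis finite_UnionD)
  moreover have orbit_one: "orbit G \<phi> \<one> = {\<one>}"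
    using A.orbit_refl [OF one_closed] by (auto simp: orbit_def \<phi>_def)
  then have "{\<one>} \<in> ?O"
    unfolding orbits_def by force
  ultimately have "(\<Sum>orb\<in>?O. card orb) = 1 + (\<Sum>orb\<in>?O - {{\<one>}}. card orb)"
    using sum.remove [of ?O "{\<one>}" card] by simp
  moreover have "(\<Sum>orb\<in>?O. card orb) = p ^ n"
    using A.disjoint_sum [OF fin, of "\<lambda>_. 1::nat"] ord by (simp add: order_def)
  moreover have "p dvd (\<Sum>orb\<in>?O - {{\<one>}}. card orb)"
  proof (rule dvd_sum)
    fix orb
    assume orb: "orb \<in> ?O - {{\<one>}}"
    then obtain x where x: "x \<in> carrier G" "orb = orbit G \<phi> x"
      unfolding orbits_def by blast
    have "x \<notin> group_center G"
      using trivial_center orb x(2) orbit_one by auto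
    then show "p dvd card orb"
      using p_dvd_card_conjugation_orbit [OF pG p x(1)] x(2) by (simp add: \<phi>_def)
  qed
  ultimately have "p dvd p ^ n - 1"
    by simp
  moreover have "p dvd p ^ n"
    using \<open>n \<noteq> 0\<close> by simp
  ultimately have "p dvd p ^ n - (p ^ n - 1)"
    by (simp add: dvd_diff_nat)
  moreover have "p ^ n \<ge> 1"
    using prime_gt_0_nat [OF p] by simp
  ultimately show False
    using p by simp
qed

end

context normal begin

lemma exists_center_mod_not_mem:
  assumes pG: "p_group p G" and p: "Factorial_Ring.prime p" and proper: "H \<noteq> carrier G"
  shows "\<exists>z \<in> center_mod G H. z \<notin> H"
proof -
  interpret Q: group "G Mod H"
    by (rule factorgroup_is_group)
  obtain x where x: "x \<in> carrier G" "x \<notin> H"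
    using proper subset by blast
  then have "H #> x \<noteq> \<one>\<^bsub>G Mod H\<^esub>"
    using rcos_eq_self_iff by (simp add: one_FactGroup)
  then have "carrier (G Mod H) \<noteq> {\<one>\<^bsub>G Mod H\<^esub>}"
    using x(1) rcos_closed by blast
  then obtain Z where Z: "Z \<in> group_center (G Mod H)" "Z \<noteq> \<one>\<^bsub>G Mod H\<^esub>"
    using Q.p_group_center_nontrivial [OF p_group_FactGroup [OF pG p] p] by blast
  then obtain z where z: "z \<in> carrier G" "Z = H #> z"
    by (auto simp: group_center_def carrier_FactGroup)
  then have "z \<in> center_mod G H"
    using Z(1) by (simp add: center_mod_eq_vimage)
  moreover have "z \<notin> H"
    using Z(2) z rcos_eq_self_iff by (simp add: one_FactGroup)
  ultimately show ?thesis
    by blast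
qed

end

section \<open>A Frattini-type argument\<close>

definition pth_powers :: "('a, 'b) monoid_scheme \<Rightarrow> nat \<Rightarrow> 'a set \<Rightarrow> 'a set" where
  "pth_powers G p N = {x [^]\<^bsub>G\<^esub> p | x. x \<in> N}"

definition commutators :: "('a, 'b) monoid_scheme \<Rightarrow> 'a set \<Rightarrow> 'a set" where
  "commutators G N = {commutator G x g | x g. x \<in> N \<and> g \<in> carrier G}"

text \<open>The subgroup \<open>H\<langle>w\<rangle>\<close>, the preimage of the cyclic subgroup of \<open>G/H\<close> generated by \<open>Hw\<close>.\<close>

definition powers_mod :: "('a, 'b) monoid_scheme \<Rightarrow> 'a set \<Rightarrow> 'a \<Rightarrow> 'a set" where
  "powers_mod G H w = {x \<in> carrier G. \<exists>i::int. H #>\<^bsub>G\<^esub> x = H #>\<^bsub>G\<^esub> (w [^]\<^bsub>G\<^esub> i)}"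

context normal begin

lemma powers_mod_subgroup:
  assumes w: "w \<in> carrier G"
  shows "subgroup (powers_mod G H w) G"
proof (rule subgroupI)
  show "powers_mod G H w \<subseteq> carrier G"
    by (auto simp: powers_mod_def)
  have "H #> \<one> = H #> (w [^] (0::int))"
    by simp
  then show "powers_mod G H w \<noteq> {}"
    unfolding powers_mod_def using one_closed by blast
next
  fix x
  assume "x \<in> powers_mod G H w"
  then obtain i :: int where x: "x \<in> carrier G" "H #> x = H #> (w [^] i)"
    by (auto simp: powers_mod_def)
  have "H #> inv x = H #> (w [^] (- i))"
    using x w by (simp add: rcos_inv int_pow_neg)
  then show "inv x \<in> powers_mod G H w"
    unfolding powers_mod_def using x by blast
next
  fix x y
  assume "x \<in> powers_mod G H w" "y \<in> powers_mod G H w"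
  then obtain i j :: int where x: "x \<in> carrier G" "H #> x = H #> (w [^] i)"
    and y: "y \<in> carrier G" "H #> y = H #> (w [^] j)"
    by (auto simp: powers_mod_def)
  have "H #> (x \<otimes> y) = H #> (w [^] (i + j))"
    using x y w by (simp add: rcos_mult int_pow_mult)
  then show "x \<otimes> y \<in> powers_mod G H w"
    unfolding powers_mod_def using x y by blast
qed

lemma subset_powers_mod: "H \<subseteq> powers_mod G H w"
proof
  fix h
  assume h: "h \<in> H"
  then have "H #> h = H #> (w [^] (0::int))"
    using rcos_const [OF is_group h] coset_mult_one [OF subset] by simp
  then show "h \<in> powers_mod G H w"
    unfolding powers_mod_def using h subset by blast
qed

lemma mem_powers_mod_self: "w \<in> carrier G \<Longrightarrow> w \<in> powers_mod G H w"
proof -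
  assume w: "w \<in> carrier G"
  then have "H #> w = H #> (w [^] (1::int))"
    by simp
  then show ?thesis
    unfolding powers_mod_def using w by blast
qed

lemma powers_mod_one: "powers_mod G H \<one> = H"
proof (intro equalityI subsetI)
  fix x
  assume "x \<in> powers_mod G H \<one>"
  then obtain i :: int where x: "x \<in> carrier G" "H #> x = H #> (\<one> [^] i)"
    unfolding powers_mod_def by blast
  then have "H #> x = H"
    using coset_mult_one [OF subset] by simp
  then show "x \<in> H"
    using rcos_eq_self_iff [OF x(1)] by blast
qed (use subset_powers_mod in blast)

lemma powers_mod_subset_center_mod:
  assumes w: "w \<in> center_mod G H"
  shows "powers_mod G H w \<subseteq> center_mod G H"
proof
  fix x
  assume "x \<in> powers_mod G H w"
  then obtain i :: int where x: "x \<in> carrier G" "H #> x = H #> (w [^] i)"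
    by (auto simp: powers_mod_def)
  have "w [^] i \<in> center_mod G H"
    by (rule subgroup_int_pow_closed [OF center_mod_subgroup w])
  then show "x \<in> center_mod G H"
    using x by (simp add: center_mod_eq_vimage)
qed

lemma powers_mod_normal:
  assumes w: "w \<in> center_mod G H"
  shows "powers_mod G H w \<lhd> G"
proof -
  have "w \<in> carrier G"
    using w by (simp add: center_mod_def)
  then show ?thesis
    by (intro normal_if_subset_center_mod powers_mod_subgroup subset_powers_mod
        powers_mod_subset_center_mod w)
qed

lemma subset_powers_mod_nat_pow:
  assumes w: "w \<in> center_mod G H" and N: "N \<subseteq> powers_mod G H w"
    and gen: "N \<subseteq> generate G (pth_powers G p N \<union> commutators G N \<union> H)"
  shows "N \<subseteq> powers_mod G H (w [^] p)"
proof -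
  have wc: "w \<in> carrier G"
    using w by (simp add: center_mod_def)
  have "pth_powers G p N \<subseteq> powers_mod G H (w [^] p)"
  proof
    fix y
    assume "y \<in> pth_powers G p N"
    then obtain x where "x \<in> N" and y: "y = x [^] p"
      by (auto simp: pth_powers_def)
    then obtain i :: int where x: "x \<in> carrier G" "H #> x = H #> (w [^] i)"
      using N by (auto simp: powers_mod_def)
    have "H #> y = H #> ((w [^] i) [^] p)"
      using x wc by (simp add: y rcos_nat_pow)
    also have "(w [^] i) [^] p = (w [^] p) [^] i"
      using wc by (simp add: int_pow_int [symmetric] int_pow_pow mult.commute)
    finally show "y \<in> powers_mod G H (w [^] p)"
      unfolding powers_mod_def using x y by blast
  qed
  moreover have "commutators G N \<subseteq> H"
    using N powers_mod_subset_center_mod [OF w] by (auto simp: commutators_def center_mod_def)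
  ultimately have "generate G (pth_powers G p N \<union> commutators G N \<union> H) \<subseteq> powers_mod G H (w [^] p)"
    using subset_powers_mod [of "w [^] p"] wc
    by (intro generate_subgroup_incl powers_mod_subgroup) auto
  then show ?thesis
    using gen by blast
qed

lemma subset_if_subset_powers_mod:
  assumes pG: "p_group p G" and w: "w \<in> center_mod G H" and N: "N \<subseteq> powers_mod G H w"
    and gen: "N \<subseteq> generate G (pth_powers G p N \<union> commutators G N \<union> H)"
  shows "N \<subseteq> H"
proof -
  obtain n where ord: "order G = p ^ n"
    using pG by (auto simp: p_group_def)
  have wc: "w \<in> carrier G"
    using w by (simp add: center_mod_def)
  have "N \<subseteq> powers_mod G H (w [^] (p ^ j))" for j
  proof (induction j)
    case 0
    then show ?case
      using N wc by simp
  next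
    case (Suc j)
    have "w [^] (p ^ j) \<in> center_mod G H"
      by (rule subgroup_nat_pow_closed [OF center_mod_subgroup w])
    then have "N \<subseteq> powers_mod G H ((w [^] (p ^ j)) [^] p)"
      using subset_powers_mod_nat_pow Suc.IH gen by blast
    then show ?case
      using wc by (simp add: nat_pow_pow mult.commute)
  qed
  moreover have "w [^] (p ^ n) = \<one>"
    using pow_order_eq_1 [OF wc] ord by simp
  ultimately show ?thesis
    using powers_mod_one by metis
qed

end

text \<open>Induction on the index of \<open>M\<close>: for \<open>z\<close> central modulo \<open>M\<close> but not in \<open>M\<close>, the
  induction hypothesis puts \<open>N\<close> into \<open>M\<langle>z\<rangle>\<close>, and then the \<open>p\<close>-th powers and commutators of
  \<open>N\<close> lie in \<open>M\<langle>z\<^sup>p\<rangle>\<close>, so \<open>N\<close> descends along \<open>M\<langle>z\<^bsup>p\<^sup>j\<^esup>\<rangle>\<close> down to \<open>M\<close>.\<close>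

lemma (in group) subset_normal_if_subset_generate_powers_commutators:
  assumes pG: "p_group p G" and p: "Factorial_Ring.prime p" and N: "N \<subseteq> carrier G"
  shows "M \<lhd> G \<Longrightarrow> N \<subseteq> generate G (pth_powers G p N \<union> commutators G N \<union> M) \<Longrightarrow> N \<subseteq> M"
proof (induction "card (carrier G) - card M" arbitrary: M rule: less_induct)
  case less
  interpret M: normal M G
    by (rule less.prems(1))
  show ?case
  proof (cases "M = carrier G")
    case True
    then show ?thesis
      using N by simp
  next
    case False
    obtain z where z: "z \<in> center_mod G M" "z \<notin> M"
      using M.exists_center_mod_not_mem [OF pG p False] by blast
    have zc: "z \<in> carrier G"
      using z by (simp add: center_mod_def)
    let ?M' = "powers_mod G M z"
    have "M \<subset> ?M'"
      using M.subset_powers_mod M.mem_powers_mod_self [OF zc] z(2) by blast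
    moreover have "?M' \<subseteq> carrier G" and "finite (carrier G)"
      using M.powers_mod_subgroup [OF zc] subgroup.subset pG by (auto simp: p_group_def)
    ultimately have "card (carrier G) - card ?M' < card (carrier G) - card M"
      by (meson card_mono diff_less_mono2 finite_subset psubset_card_mono order.strict_trans2)
    moreover have "N \<subseteq> generate G (pth_powers G p N \<union> commutators G N \<union> ?M')"
      using less.prems(2) mono_generate [of _ "pth_powers G p N \<union> commutators G N \<union> ?M'"]
        M.subset_powers_mod by blast
    ultimately have "N \<subseteq> ?M'"
      using less.hyps M.powers_mod_normal [OF z(1)] by blast
    then show ?thesis
      using M.subset_if_subset_powers_mod [OF pG z(1) _ less.prems(2)] by blast
  qed
qed

section \<open>Powerfully embedded subgroups\<close>

definition pow_subgroup :: "('a, 'b) monoid_scheme \<Rightarrow> nat \<Rightarrow> 'a set \<Rightarrow> 'a set" where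
  "pow_subgroup G p N = generate G (pth_powers G p N)"

text \<open>Encodes \<open>[N, G] \<subseteq> N\<^sup>p\<close> (Lubotzky and Mann).\<close>

definition powerfully_embedded :: "nat \<Rightarrow> ('a, 'b) monoid_scheme \<Rightarrow> 'a set \<Rightarrow> bool" where
  "powerfully_embedded p G N \<longleftrightarrow> N \<lhd> G \<and> N \<subseteq> center_mod G (pow_subgroup G p N)"

context normal begin

lemma nat_pow_mult_nat_pow_mod:
  assumes a: "a \<in> carrier G" and b: "b \<in> carrier G" and p: "odd (p::nat)"
    and central: "commutator G b a \<in> center_mod G H" and order: "commutator G b a [^] p \<in> H"
  shows "\<exists>w \<in> H. a [^] p \<otimes> b [^] p = (a \<otimes> b) [^] p \<otimes> w"
proof -
  interpret Q: group "G Mod H"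
    by (rule factorgroup_is_group)
  let ?e = "commutator (G Mod H) (H #> b) (H #> a)"
  have e: "?e \<in> group_center (G Mod H)"
    using central a b by (simp add: center_mod_eq_vimage rcos_commutator)
  have "?e [^]\<^bsub>G Mod H\<^esub> p = \<one>\<^bsub>G Mod H\<^esub>"
    using order a b rcos_eq_self_iff [of "commutator G b a [^] p"]
    by (simp add: rcos_nat_pow rcos_commutator one_FactGroup)
  then have "((H #> a) \<otimes>\<^bsub>G Mod H\<^esub> (H #> b)) [^]\<^bsub>G Mod H\<^esub> p
      = (H #> a) [^]\<^bsub>G Mod H\<^esub> p \<otimes>\<^bsub>G Mod H\<^esub> (H #> b) [^]\<^bsub>G Mod H\<^esub> p"
    using e a b p by (intro Q.nat_pow_mult_odd_class_two) (auto simp: group_center_def)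
  then have "H #> (a [^] p \<otimes> b [^] p) = H #> ((a \<otimes> b) [^] p)"
    using a b by (simp add: rcos_mult rcos_nat_pow)
  then show ?thesis
    using a b by (intro rcos_eq_rcos_imp_mult) auto
qed

lemma commutator_nat_pow_mem:
  assumes x: "x \<in> carrier G" and g: "g \<in> carrier G" and p: "odd (p::nat)"
    and order: "commutator G x g [^] p \<in> H"
    and central: "commutator G (commutator G x g) x \<in> center_mod G H"
  shows "commutator G (x [^] p) g \<in> H"
proof -
  interpret Q: group "G Mod H"
    by (rule factorgroup_is_group)
  let ?c = "commutator (G Mod H) (H #> x) (H #> g)"
  have c: "?c \<in> carrier (G Mod H)"
    using x g by simp
  have e: "commutator (G Mod H) ?c (H #> x) \<in> group_center (G Mod H)"
    using central x g by (simp add: center_mod_eq_vimage rcos_commutator)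
  have "?c [^]\<^bsub>G Mod H\<^esub> p = \<one>\<^bsub>G Mod H\<^esub>"
    using order x g rcos_eq_self_iff [of "commutator G x g [^] p"]
    by (simp add: rcos_nat_pow rcos_commutator one_FactGroup)
  then have "(H #> x) [^]\<^bsub>G Mod H\<^esub> p \<otimes>\<^bsub>G Mod H\<^esub> (H #> g)
      = (H #> g) \<otimes>\<^bsub>G Mod H\<^esub> (H #> x) [^]\<^bsub>G Mod H\<^esub> p"
    using e c x g p by (intro Q.nat_pow_commute_if_commutator_nat_pow_eq_one) (auto simp: group_center_def)
  then show ?thesis
    using x g by (simp add: commutator_mem_iff_commute rcos_nat_pow)
qed

lemma pth_powers_subset_center_mod:
  assumes odd: "odd p" and N: "N \<subseteq> center_mod G A"
    and A_pow: "pth_powers G p A \<subseteq> H" and A_comm: "commutators G A \<subseteq> center_mod G H"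
  shows "pth_powers G p N \<subseteq> center_mod G H"
proof
  fix y
  assume "y \<in> pth_powers G p N"
  then obtain x where x: "x \<in> N" "y = x [^] p"
    by (auto simp: pth_powers_def)
  have xc: "x \<in> carrier G"
    using x(1) N by (auto simp: center_mod_def)
  have "commutator G (x [^] p) g \<in> H" if g: "g \<in> carrier G" for g
  proof (rule commutator_nat_pow_mem [OF xc g odd])
    have c: "commutator G x g \<in> A"
      using x(1) g N by (auto simp: center_mod_def)
    then show "commutator G x g [^] p \<in> H"
      using A_pow by (auto simp: pth_powers_def)
    show "commutator G (commutator G x g) x \<in> center_mod G H"
      using c xc A_comm by (auto simp: commutators_def)
  qed
  then show "y \<in> center_mod G H"
    using x(2) xc by (simp add: center_mod_def)
qed

end

context group begin

lemma pth_powers_conj_closed: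
  assumes N: "N \<lhd> G" and y: "y \<in> pth_powers G p N" and g: "g \<in> carrier G"
  shows "g \<otimes> y \<otimes> inv g \<in> pth_powers G p N"
proof -
  obtain x where x: "x \<in> N" "y = x [^] p"
    using y by (auto simp: pth_powers_def)
  have xc: "x \<in> carrier G"
    using x(1) normal_imp_subgroup [OF N] subgroup.subset by blast
  have "g \<otimes> y \<otimes> inv g = (g \<otimes> x \<otimes> inv g) [^] p"
    using conj_nat_pow [of "inv g" x p] g xc x(2) by simp
  moreover have "g \<otimes> x \<otimes> inv g \<in> N"
    using normal.inv_op_closed2 [OF N g x(1)] .
  ultimately show ?thesis
    by (auto simp: pth_powers_def)
qed

lemma commutators_conj_closed:
  assumes N: "N \<lhd> G" and y: "y \<in> commutators G N" and h: "h \<in> carrier G"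
  shows "h \<otimes> y \<otimes> inv h \<in> commutators G N"
proof -
  obtain x g where x: "x \<in> N" "g \<in> carrier G" "y = commutator G x g"
    using y by (auto simp: commutators_def)
  have xc: "x \<in> carrier G"
    using x(1) normal_imp_subgroup [OF N] subgroup.subset by blast
  have "h \<otimes> y \<otimes> inv h = commutator G (h \<otimes> x \<otimes> inv h) (h \<otimes> g \<otimes> inv h)"
    using h xc x(2,3) by (simp add: commutator_def m_assoc inv_mult_group)
  moreover have "h \<otimes> x \<otimes> inv h \<in> N"
    using normal.inv_op_closed2 [OF N h x(1)] .
  ultimately show ?thesis
    using h x(2) by (auto simp: commutators_def)
qed

lemma pth_powers_subset: "N \<subseteq> carrier G \<Longrightarrow> pth_powers G p N \<subseteq> carrier G"
  by (auto simp: pth_powers_def)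

lemma commutators_subset: "N \<subseteq> carrier G \<Longrightarrow> commutators G N \<subseteq> carrier G"
  by (auto simp: commutators_def)

lemma normal_generate_pth_powers_commutators:
  assumes "N \<lhd> G" "L \<lhd> G"
  shows "generate G (pth_powers G p N \<union> commutators G L) \<lhd> G"
  using assms pth_powers_conj_closed commutators_conj_closed
    pth_powers_subset [OF normal_imp_subgroup [THEN subgroup.subset]]
    commutators_subset [OF normal_imp_subgroup [THEN subgroup.subset]]
  by (intro normal_generateI) blast+

lemma pow_subgroup_normal: "N \<lhd> G \<Longrightarrow> pow_subgroup G p N \<lhd> G"
  unfolding pow_subgroup_def
  using pth_powers_conj_closed pth_powers_subset [OF normal_imp_subgroup [THEN subgroup.subset]]
  by (intro normal_generateI) blast+

lemma normal_generate_commutators: "N \<lhd> G \<Longrightarrow> generate G (commutators G N) \<lhd> G"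
  using commutators_conj_closed commutators_subset [OF normal_imp_subgroup [THEN subgroup.subset]]
  by (intro normal_generateI) blast+

text \<open>With \<open>A = N\<^sup>p\<close>, \<open>L = [A, G]\<close> and \<open>M = A\<^sup>p [L, G]\<close>, the quotient \<open>G/M\<close> has class two
  on the relevant elements, which gives \<open>[A, G] \<subseteq> M\<close>; since \<open>M \<subseteq> L\<^sup>p [L, G] A\<^sup>p\<close>, the
  Frattini-type argument then yields \<open>L \<subseteq> A\<^sup>p\<close>.\<close>

lemma powerfully_embedded_pow_subgroup:
  assumes pG: "p_group p G" and p: "Factorial_Ring.prime p" and odd: "odd p"
    and pe: "powerfully_embedded p G N"
  shows "powerfully_embedded p G (pow_subgroup G p N)"
proof -
  define A where "A = pow_subgroup G p N"
  define L where "L = generate G (commutators G A)"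
  define M where "M = generate G (pth_powers G p A \<union> commutators G L)"
  have nN: "N \<lhd> G" and N_center: "N \<subseteq> center_mod G A"
    using pe by (simp_all add: powerfully_embedded_def A_def)
  have nA: "A \<lhd> G"
    unfolding A_def by (rule pow_subgroup_normal [OF nN])
  have nL: "L \<lhd> G"
    unfolding L_def by (rule normal_generate_commutators [OF nA])
  interpret M: normal M G
    unfolding M_def by (rule normal_generate_pth_powers_commutators [OF nA nL])
  have Ac: "A \<subseteq> carrier G" and Lc: "L \<subseteq> carrier G"
    using nA nL normal_imp_subgroup subgroup.subset by blast+
  have "commutators G A \<subseteq> center_mod G M"
  proof
    fix c
    assume "c \<in> commutators G A"
    then have c: "c \<in> L"
      unfolding L_def by (rule generate.incl)
    have "commutator G c h \<in> M" if "h \<in> carrier G" for h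
      using c that unfolding M_def commutators_def by (blast intro: generate.incl)
    then show "c \<in> center_mod G M"
      using c Lc by (auto simp: center_mod_def)
  qed
  moreover have "pth_powers G p A \<subseteq> M"
    unfolding M_def by (blast intro: generate.incl)
  ultimately have "pth_powers G p N \<subseteq> center_mod G M"
    using M.pth_powers_subset_center_mod [OF odd N_center] by blast
  then have "A \<subseteq> center_mod G M"
    unfolding A_def pow_subgroup_def by (rule generate_subgroup_incl [OF _ M.center_mod_subgroup])
  then have "commutators G A \<subseteq> M"
    by (auto simp: commutators_def center_mod_def)
  then have "L \<subseteq> M"
    unfolding L_def by (rule generate_subgroup_incl [OF _ M.is_subgroup])
  also have "M \<subseteq> generate G (pth_powers G p L \<union> commutators G L \<union> pow_subgroup G p A)"
    unfolding M_def pow_subgroup_def by (intro mono_generate) (auto intro: generate.incl)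
  finally have "L \<subseteq> pow_subgroup G p A"
    by (rule subset_normal_if_subset_generate_powers_commutators [OF pG p Lc pow_subgroup_normal [OF nA]])
  then have "A \<subseteq> center_mod G (pow_subgroup G p A)"
    using Ac by (auto simp: center_mod_def L_def commutators_def intro: generate.incl)
  then show ?thesis
    using nA by (simp add: powerfully_embedded_def A_def)
qed

lemma powerfully_embedded_carrier:
  assumes "powerful p G"
  shows "powerfully_embedded p G (carrier G)"
proof -
  have "commutator G x g \<in> derived G (carrier G)" if "x \<in> carrier G" "g \<in> carrier G" for x g
  proof -
    have "commutator G x g = inv x \<otimes> inv g \<otimes> inv (inv x) \<otimes> inv (inv g)"
      using that by (simp add: commutator_def)
    then show ?thesis
      using that unfolding derived_def by (blast intro: generate.incl)
  qed
  moreover have "pth_power_subgroup p G = pow_subgroup G p (carrier G)"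
    by (simp add: pth_power_subgroup_def pow_subgroup_def pth_powers_def)
  ultimately show ?thesis
    using assms normal_self by (auto simp: powerfully_embedded_def powerful_def center_mod_def)
qed

lemma subset_pow_subgroup_imp_trivial:
  assumes "p_group p G" "Factorial_Ring.prime p" "N \<subseteq> carrier G" "N \<subseteq> pow_subgroup G p N"
  shows "N \<subseteq> {\<one>}"
proof (rule subset_normal_if_subset_generate_powers_commutators [OF assms(1-3) one_is_normal])
  show "N \<subseteq> generate G (pth_powers G p N \<union> commutators G N \<union> {\<one>})"
    using assms(4) mono_generate [of "pth_powers G p N" "pth_powers G p N \<union> commutators G N \<union> {\<one>}"]
    unfolding pow_subgroup_def by blast
qed

end

section \<open>Products of \<open>p\<close>-th powers in powerful groups\<close>

primrec pow_series :: "('a, 'b) monoid_scheme \<Rightarrow> nat \<Rightarrow> nat \<Rightarrow> 'a set" where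
  "pow_series G p 0 = carrier G"
| "pow_series G p (Suc k) = pow_subgroup G p (pow_series G p k)"

definition absorbs_pth_powers :: "nat \<Rightarrow> ('a, 'b) monoid_scheme \<Rightarrow> 'a set \<Rightarrow> bool" where
  "absorbs_pth_powers p G W \<longleftrightarrow>
    (\<forall>c \<in> carrier G. \<forall>w \<in> W. \<exists>d \<in> carrier G. c [^]\<^bsub>G\<^esub> p \<otimes>\<^bsub>G\<^esub> w = d [^]\<^bsub>G\<^esub> p)"

context group begin

lemma pow_series_normal: "pow_series G p k \<lhd> G"
  by (induction k) (simp_all add: normal_self pow_subgroup_normal)

lemma pow_series_subset: "pow_series G p k \<subseteq> carrier G"
  using pow_series_normal normal_imp_subgroup subgroup.subset by blast

lemma pow_series_Suc_subset: "pow_series G p (Suc k) \<subseteq> pow_series G p k"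
proof -
  have "pth_powers G p (pow_series G p k) \<subseteq> pow_series G p k"
    using subgroup_nat_pow_closed [OF normal_imp_subgroup [OF pow_series_normal]]
    by (auto simp: pth_powers_def)
  then show ?thesis
    unfolding pow_series.simps pow_subgroup_def
    by (rule generate_subgroup_incl [OF _ normal_imp_subgroup [OF pow_series_normal]])
qed

lemma pow_series_antimono: "antimono (pow_series G p)"
  unfolding antimono_iff_le_Suc using pow_series_Suc_subset by blast

lemma pow_series_card_eq_one:
  assumes pG: "p_group p G" and p: "Factorial_Ring.prime p"
  shows "pow_series G p (card (carrier G)) = {\<one>}"
proof -
  have fin: "finite (carrier G)"
    using pG by (simp add: p_group_def)
  have one: "\<one> \<in> pow_series G p k" for k
    using subgroup.one_closed [OF normal_imp_subgroup [OF pow_series_normal]] .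
  have "pow_series G p k = {\<one>} \<or> card (pow_series G p k) + k \<le> card (carrier G)" for k
  proof (induction k)
    case (Suc k)
    show ?case
    proof (cases "pow_series G p k = {\<one>}")
      case True
      then show ?thesis
        using pow_series_Suc_subset [of p k] one [of "Suc k"] by blast
    next
      case False
      then have "\<not> pow_series G p k \<subseteq> pow_subgroup G p (pow_series G p k)"
        using subset_pow_subgroup_imp_trivial [OF pG p pow_series_subset] one by blast
      then have "pow_series G p (Suc k) \<subset> pow_series G p k"
        using pow_series_Suc_subset by auto
      then have "card (pow_series G p (Suc k)) < card (pow_series G p k)"
        using fin pow_series_subset by (meson finite_subset psubset_card_mono)
      then show ?thesis
        using Suc False by simp
    qed
  qed simp
  then show ?thesis
    by (metis add_le_same_cancel2 card_0_eq empty_iff fin finite_subset one pow_series_subset le_zero_eq)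
qed

lemma pow_series_center_mod:
  assumes pG: "p_group p G" and p: "Factorial_Ring.prime p" and odd: "odd p"
    and powerful: "powerful p G"
  shows "pow_series G p k \<subseteq> center_mod G (pow_series G p (Suc k))"
proof -
  have "powerfully_embedded p G (pow_series G p k)"
    by (induction k) (simp_all add: powerfully_embedded_carrier [OF powerful]
        powerfully_embedded_pow_subgroup [OF pG p odd])
  then show ?thesis
    by (simp add: powerfully_embedded_def)
qed

lemma nat_pow_mult_nat_pow_pow_series:
  assumes pG: "p_group p G" and p: "Factorial_Ring.prime p" and odd: "odd p"
    and powerful: "powerful p G" and c: "c \<in> carrier G" and u: "u \<in> pow_series G p k"
  shows "\<exists>w \<in> pow_series G p (Suc (Suc k)). c [^] p \<otimes> u [^] p = (c \<otimes> u) [^] p \<otimes> w"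
proof (rule normal.nat_pow_mult_nat_pow_mod [OF pow_series_normal c _ odd])
  show "u \<in> carrier G"
    using u pow_series_subset by blast
  have e: "commutator G u c \<in> pow_series G p (Suc k)"
    using pow_series_center_mod [OF pG p odd powerful] u c by (auto simp: center_mod_def)
  then show "commutator G u c \<in> center_mod G (pow_series G p (Suc (Suc k)))"
    using pow_series_center_mod [OF pG p odd powerful] by blast
  show "commutator G u c [^] p \<in> pow_series G p (Suc (Suc k))"
    using e by (auto simp: pow_subgroup_def pth_powers_def intro: generate.incl)
qed

lemma absorbs_pth_powers_generate:
  assumes S: "S \<subseteq> carrier G" and inv_S: "\<And>x. x \<in> S \<Longrightarrow> inv x \<in> S"
    and absorbs: "absorbs_pth_powers p G S"
  shows "absorbs_pth_powers p G (generate G S)"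
proof -
  have "\<forall>c \<in> carrier G. \<exists>d \<in> carrier G. c [^] p \<otimes> w = d [^] p" if "w \<in> generate G S" for w
    using that
  proof (induction w rule: generate.induct)
    case one
    then show ?case
      by force
  next
    case (incl y)
    then show ?case
      using absorbs by (auto simp: absorbs_pth_powers_def)
  next
    case (inv y)
    then show ?case
      using absorbs inv_S by (auto simp: absorbs_pth_powers_def)
  next
    case (eng y z)
    have yz: "y \<in> carrier G" "z \<in> carrier G"
      using eng.hyps S generate_in_carrier by blast+
    show ?case
    proof
      fix c
      assume c: "c \<in> carrier G"
      obtain d where d: "d \<in> carrier G" "c [^] p \<otimes> y = d [^] p"
        using eng.IH(1) c by blast
      obtain d' where "d' \<in> carrier G" "d [^] p \<otimes> z = d' [^] p"
        using eng.IH(2) d(1) by blast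
      moreover have "c [^] p \<otimes> (y \<otimes> z) = d [^] p \<otimes> z"
        using c yz d(2) by (simp flip: m_assoc)
      ultimately show "\<exists>d \<in> carrier G. c [^] p \<otimes> (y \<otimes> z) = d [^] p"
        by auto
    qed
  qed
  then show ?thesis
    by (simp add: absorbs_pth_powers_def)
qed

lemma absorbs_pth_powers_pow_series_Suc:
  assumes pG: "p_group p G" and p: "Factorial_Ring.prime p" and odd: "odd p"
    and powerful: "powerful p G" and absorbs: "absorbs_pth_powers p G (pow_series G p (Suc (Suc k)))"
  shows "absorbs_pth_powers p G (pow_series G p (Suc k))"
  unfolding pow_series.simps(2) [of G p k] pow_subgroup_def
proof (rule absorbs_pth_powers_generate)
  show "pth_powers G p (pow_series G p k) \<subseteq> carrier G"
    by (rule pth_powers_subset [OF pow_series_subset])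
  fix y
  assume "y \<in> pth_powers G p (pow_series G p k)"
  then obtain u where u: "u \<in> pow_series G p k" "y = u [^] p"
    by (auto simp: pth_powers_def)
  have "u \<in> carrier G"
    using u(1) pow_series_subset by blast
  then have "inv y = (inv u) [^] p"
    by (simp add: u(2) nat_pow_inv)
  moreover have "inv u \<in> pow_series G p k"
    by (rule subgroup.m_inv_closed [OF normal_imp_subgroup [OF pow_series_normal] u(1)])
  ultimately show "inv y \<in> pth_powers G p (pow_series G p k)"
    by (auto simp: pth_powers_def)
next
  show "absorbs_pth_powers p G (pth_powers G p (pow_series G p k))"
    unfolding absorbs_pth_powers_def
  proof (intro ballI)
    fix c y
    assume c: "c \<in> carrier G" and "y \<in> pth_powers G p (pow_series G p k)"
    then obtain u where u: "u \<in> pow_series G p k" "y = u [^] p"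
      by (auto simp: pth_powers_def)
    obtain w where w: "w \<in> pow_series G p (Suc (Suc k))" "c [^] p \<otimes> u [^] p = (c \<otimes> u) [^] p \<otimes> w"
      using nat_pow_mult_nat_pow_pow_series [OF pG p odd powerful c u(1)] by blast
    moreover have "c \<otimes> u \<in> carrier G"
      using c u(1) pow_series_subset by blast
    ultimately show "\<exists>d \<in> carrier G. c [^] p \<otimes> y = d [^] p"
      using absorbs u(2) by (simp add: absorbs_pth_powers_def)
  qed
qed

lemma absorbs_pth_powers_pow_series:
  assumes pG: "p_group p G" and p: "Factorial_Ring.prime p" and odd: "odd p"
    and powerful: "powerful p G"
  shows "absorbs_pth_powers p G (pow_series G p (Suc k))"
proof -
  let ?m = "card (carrier G)"
  have trivial: "absorbs_pth_powers p G (pow_series G p (Suc k))" if "?m \<le> k" for k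
  proof -
    have "pow_series G p (Suc k) \<subseteq> {\<one>}"
      using antimonoD [OF pow_series_antimono [of p], of ?m "Suc k"] that pow_series_card_eq_one [OF pG p]
      by simp
    then show ?thesis
      unfolding absorbs_pth_powers_def by (metis nat_pow_closed r_one singletonD subsetD)
  qed
  show ?thesis
  proof (cases "k \<le> ?m")
    case True
    then show ?thesis
    proof (induction k rule: inc_induct)
      case base
      then show ?case
        by (rule trivial) simp
    next
      case (step k)
      show ?case
        by (rule absorbs_pth_powers_pow_series_Suc [OF pG p odd powerful step(3)])
    qed
  next
    case False
    then show ?thesis
      by (intro trivial) simp
  qed
qed

theorem powerful_nat_pow_mult_nat_pow:
  assumes "p_group p G" "Factorial_Ring.prime p" "odd p" "powerful p G"
    and x: "x \<in> carrier G" and y: "y \<in> carrier G"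
  shows "\<exists>d \<in> carrier G. x [^] p \<otimes> y [^] p = d [^] p"
proof -
  have "y [^] p \<in> pow_series G p (Suc 0)"
    using y by (auto simp: pow_subgroup_def pth_powers_def intro: generate.incl)
  then show ?thesis
    using absorbs_pth_powers_pow_series [OF assms(1-4), of 0] x
    by (simp add: absorbs_pth_powers_def)
qed

end

theorem lemma3p4:
  fixes G (structure) and p :: nat
  assumes "Factorial_Ring.prime p" and "odd p"
    and "p_group p G"
    and "quasi_powerful p G"
    and "g \<in> carrier G" and "h \<in> carrier G"
  shows "\<exists>j \<in> carrier G. \<exists>z \<in> group_center G.
           g [^] p \<otimes> h [^] p = j [^] p \<otimes> z"
proof -
  note p = assms(1) and odd = assms(2) and pG = assms(3) and g = assms(5) and h = assms(6)
  interpret group G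
    using pG by (simp add: p_group_def)
  interpret Z: normal "group_center G" G
    by (rule group_center_normal)
  interpret Q: group "G Mod group_center G"
    by (rule Z.factorgroup_is_group)
  let ?\<pi> = "(#>) (group_center G)"
  have "powerful p (G Mod group_center G)"
    using assms(4) by (simp add: quasi_powerful_def)
  from Q.powerful_nat_pow_mult_nat_pow [OF Z.p_group_FactGroup [OF pG p] p odd this
      Z.rcos_closed [OF g] Z.rcos_closed [OF h]]
  obtain D where D: "D \<in> carrier (G Mod group_center G)"
    "?\<pi> g [^]\<^bsub>G Mod group_center G\<^esub> p \<otimes>\<^bsub>G Mod group_center G\<^esub> ?\<pi> h [^]\<^bsub>G Mod group_center G\<^esub> p
      = D [^]\<^bsub>G Mod group_center G\<^esub> p"
    by blast
  obtain j where j: "j \<in> carrier G" "D = ?\<pi> j"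
    using D(1) by (auto simp: carrier_FactGroup)
  have "?\<pi> (g [^] p \<otimes> h [^] p) = ?\<pi> (j [^] p)"
    using D(2) g h j by (simp add: Z.rcos_mult Z.rcos_nat_pow)
  then have "\<exists>z \<in> group_center G. g [^] p \<otimes> h [^] p = j [^] p \<otimes> z"
    using g h j(1) by (intro Z.rcos_eq_rcos_imp_mult) simp_all
  then show ?thesis
    using j(1) by blast
qed

end
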